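(* Let $X$ be a random variable on a finite alphabet $\mathcal{X}$ with pmf $P_X$, let $\mathcal{S}$ be a finite set, and let $\delta,\eta,\nu_1>0$ be such that for all sufficiently large $N$ and every $s^N\in\mathcal{S}^N$, $\Pr\{X^N\in\tilde T^N[X,s^N]_{\delta,\eta}\}>1-2^{-N\nu_1}$, where $X^N=(X_1,\dots,X_N)$ is i.i.d. with pmf $P_X$. Let $R'>\nu_1$ and $L'=2^{NR'}$, and let $\mathbf{C}=(X^N(1),\dots,X^N(L'))$ be a random codebook whose $L'N$ letters are i.i.d. with pmf $P_X$. Then $\Pr\{\mathbf{C}\text{ is good with respect to }X\}>1-\epsilon_1$, where $\epsilon_1\to0$ as $N\to\infty$.
   Context: For $s^N\in\mathcal{S}^N$ and $a\in\mathcal{S}$, $\mathcal{I}(a:s^N)=\{1\le i\le N: s_i=a\}$, $\mu_a=|\mathcal{I}(a:s^N)|$, and $\mathcal{S}(s^N,\eta)=\{a\in\mathcal{S}:\mu_a>N\eta/|\mathcal{S}|\}$. For a pmf $P$ on a finite set $\mathcal{A}$, the $\delta$-letter typical set $T^n_\delta(P)$ is the set of $a^n\in\mathcal{A}^n$ with $|\frac1nN(b:a^n)-P(b)|\le\delta P(b)$ for all $b\in\mathcal{A}$, where $N(b:a^n)$ is the number of positions of $a^n$ equal to $b$. The set $\tilde T^N[X,s^N]_{\delta,\eta}$ consists of all $x^N\in\mathcal{X}^N$ with $P_X(x_i)>0$ for all $i$ and $x_{\mathcal{I}(a:s^N)}=(x_i)_{i\in\mathcal{I}(a:s^N)}\in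 T^{\mu_a}_\delta(P_X)$ for all $a\in\mathcal{S}(s^N,\eta)$. A codebook $\mathcal{C}=(x^N(l))_{l=1}^{L'}$ (an indexed list, repetitions allowed) is called good with respect to $X$ (with parameters $\delta,\eta,\nu_1$) if for every $s^N\in\mathcal{S}^N$ the number of indices $l$ with $x^N(l)\in\tilde T^N[X,s^N]_{\delta,\eta}$ exceeds $(1-2\cdot2^{-N\nu_1})L'$. *)

theory Defs
  imports "HOL-Probability.Probability"
begin

text \<open>Sequences of length N are functions on nat, only indices below N matter.\<close>

definition idx_set :: "'s \<Rightarrow> (nat \<Rightarrow> 's) \<Rightarrow> nat \<Rightarrow> nat set" where
  "idx_set a s N = {i. i < N \<and> s i = a}"

definition mu :: "'s \<Rightarrow> (nat \<Rightarrow> 's) \<Rightarrow> nat \<Rightarrow> nat" where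
  "mu a s N = card (idx_set a s N)"

definition heavy_states :: "(nat \<Rightarrow> 's::finite) \<Rightarrow> nat \<Rightarrow> real \<Rightarrow> 's set" where
  "heavy_states s N \<eta> = {a. real (mu a s N) > real N * \<eta> / real (card (UNIV :: 's set))}"

definition letter_typical :: "nat \<Rightarrow> real \<Rightarrow> 'a pmf \<Rightarrow> 'a list set" where
  "letter_typical n \<delta> P = {as. length as = n \<and>
     (\<forall>b. \<bar>real (length (filter (\<lambda>c. c = b) as)) / real n - pmf P b\<bar> \<le> \<delta> * pmf P b)}"

definition cond_typical :: "'x pmf \<Rightarrow> (nat \<Rightarrow> 's::finite) \<Rightarrow> nat \<Rightarrow> real \<Rightarrow> real \<Rightarrow> (nat \<Rightarrow> 'x) set" where
  "cond_typical P s N \<delta> \<eta> = {x. (\<forall>i<N. pmf P (x i) > 0) \<and>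
     (\<forall>a\<in>heavy_states s N \<eta>.
        map x (sorted_list_of_set (idx_set a s N)) \<in> letter_typical (mu a s N) \<delta> P)}"

definition good_codebook :: "'x pmf \<Rightarrow> 's::finite itself \<Rightarrow> nat \<Rightarrow> nat \<Rightarrow> real \<Rightarrow> real \<Rightarrow> real
      \<Rightarrow> (nat \<Rightarrow> nat \<Rightarrow> 'x) \<Rightarrow> bool" where
  "good_codebook P _ N L \<delta> \<eta> \<nu>1 C \<longleftrightarrow>
     (\<forall>s :: nat \<Rightarrow> 's. real (card {l. l < L \<and> C l \<in> cond_typical P s N \<delta> \<eta>})
        > (1 - 2 * 2 powr (- (real N * \<nu>1))) * real L)"

definition iid_seq :: "'x pmf \<Rightarrow> nat \<Rightarrow> (nat \<Rightarrow> 'x) pmf" where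
  "iid_seq P N = Pi_pmf {..<N} undefined (\<lambda>_. P)"

definition random_codebook :: "'x pmf \<Rightarrow> nat \<Rightarrow> nat \<Rightarrow> (nat \<Rightarrow> nat \<Rightarrow> 'x) pmf" where
  "random_codebook P N L = Pi_pmf {..<L} undefined (\<lambda>_. iid_seq P N)"

end

theory Submission imports Defs "HOL-Real_Asymp.Real_Asymp" begin

text \<open>Fix a state sequence \<open>s\<close> and let \<open>p = 2^{-N \<nu>1}\<close>. Each of the \<open>L\<close> independent codewords
  misses \<open>T\<^sup>N[X,s]\<close> with probability less than \<open>p\<close>, so by Markov's inequality applied to
  \<open>2\<close> to the power of the number of misses, at least \<open>2pL\<close> misses occur with probability at most
  \<open>(1 + p)^L / 4^{pL} \<le> e^{-(2 ln 2 - 1) p L}\<close>. Only the first \<open>N\<close> letters of \<open>s\<close> matter, so a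
  union bound over the \<open>|S|^N\<close> relevant sequences bounds the probability that the codebook is not
  good by \<open>|S|^N e^{-(2 ln 2 - 1) p L}\<close>. Since \<open>pL \<ge> 2^{N(R' - \<nu>1)} - 1\<close> grows doubly
  exponentially, this tends to \<open>0\<close>.\<close>

lemma measure_pmf_prob_Compl: "measure_pmf.prob M (- A) = 1 - measure_pmf.prob M A"
  using measure_pmf.prob_compl[of A M] by (simp add: Compl_eq_Diff_UNIV)

lemma cond_typical_restrict:
  "cond_typical P (\<lambda>i. if i < N then s i else a0) N \<delta> \<eta> = cond_typical P s N \<delta> \<eta>"
proof -
  have "idx_set a (\<lambda>i. if i < N then s i else a0) N = idx_set a s N" for a
    unfolding idx_set_def by auto
  then show ?thesis
    unfolding cond_typical_def heavy_states_def mu_def by simp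
qed

lemma prob_Pi_pmf_card_outside_ge:
  "measure_pmf.prob (Pi_pmf {..<L} d (\<lambda>_. M)) {C. t \<le> real (card {l. l < L \<and> C l \<notin> T})}
     \<le> exp (measure_pmf.prob M (- T) * real L) / 2 powr t"
proof -
  let ?C = "Pi_pmf {..<L} d (\<lambda>_. M)"
  define q where "q = measure_pmf.prob M (- T)"
  define f where "f w = (if w \<in> T then 1 else 2 :: real)" for w
  define Y where "Y C = (\<Prod>l<L. f (C l))" for C
  have f_bounded: "integrable M f"
    by (rule measure_pmf.integrable_const_bound[where B = 2]) (auto simp: f_def)
  have f_nonneg: "0 \<le> f w" for w
    by (simp add: f_def)
  have f_eq: "f = (\<lambda>w. 1 + indicator (- T) w)"
    by (auto simp: f_def indicator_def fun_eq_iff)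
  have Ef: "measure_pmf.expectation M f = 1 + q"
    unfolding f_eq q_def
    by (subst Bochner_Integration.integral_add)
       (auto intro!: measure_pmf.integrable_const_bound[where B = 1])
  have Y_eq: "Y C = 2 ^ card {l. l < L \<and> C l \<notin> T}" for C
  proof -
    have "Y C = (\<Prod>l\<in>{..<L} \<inter> {l. C l \<notin> T}. 2) * (\<Prod>l\<in>{..<L} \<inter> - {l. C l \<notin> T}. 1)"
      unfolding Y_def f_def by (subst prod.If_cases[symmetric]) (auto intro!: prod.cong)
    also have "{..<L} \<inter> {l. C l \<notin> T} = {l. l < L \<and> C l \<notin> T}" by auto
    finally show ?thesis by simp
  qed
  have "measure_pmf.prob ?C {C. t \<le> real (card {l. l < L \<and> C l \<notin> T})}
      \<le> measure_pmf.prob ?C {C \<in> space (measure_pmf ?C). 2 powr t \<le> Y C}"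
    by (intro measure_pmf.finite_measure_mono)
       (auto simp: Y_eq powr_realpow[symmetric] order_trans[OF powr_mono])
  also have "\<dots> \<le> measure_pmf.expectation ?C Y / 2 powr t"
    by (rule integral_Markov_inequality_measure[where A = "{}"])
       (auto simp: Y_def f_nonneg intro!: prod_nonneg integrable_prod_Pi_pmf f_bounded)
  also have "measure_pmf.expectation ?C Y = (1 + q) ^ L"
    unfolding Y_def by (subst expectation_prod_Pi_pmf) (auto simp: f_bounded f_nonneg Ef)
  also have "(1 + q) ^ L \<le> exp q ^ L"
    using exp_ge_add_one_self[of q] by (intro power_mono) (auto simp: q_def)
  also have "exp q ^ L = exp (q * real L)"
    by (simp add: exp_of_nat2_mult mult.commute)
  finally show ?thesis
    by (simp add: q_def divide_right_mono)
qed

lemma prob_Pi_pmf_card_outside_ge_twice: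
  assumes "measure_pmf.prob M (- T) \<le> p"
  shows "measure_pmf.prob (Pi_pmf {..<L} d (\<lambda>_. M)) {C. 2 * p * real L \<le> real (card {l. l < L \<and> C l \<notin> T})}
     \<le> exp (- ((2 * ln 2 - 1) * (p * real L)))"
proof -
  have "measure_pmf.prob (Pi_pmf {..<L} d (\<lambda>_. M)) {C. 2 * p * real L \<le> real (card {l. l < L \<and> C l \<notin> T})}
      \<le> exp (measure_pmf.prob M (- T) * real L) / 2 powr (2 * p * real L)"
    by (rule prob_Pi_pmf_card_outside_ge)
  also have "\<dots> \<le> exp (p * real L) / 2 powr (2 * p * real L)"
    using assms by (intro divide_right_mono) (auto intro!: mult_right_mono)
  also have "\<dots> = exp (- ((2 * ln 2 - 1) * (p * real L)))"
    by (simp add: powr_def algebra_simps flip: exp_diff)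
  finally show ?thesis .
qed

lemma not_good_codebook_obtains_state_seq:
  assumes "\<not> good_codebook P TYPE('s) N L \<delta> \<eta> \<nu>1 C"
  obtains s :: "nat \<Rightarrow> 's::finite" where "s \<in> PiE_dflt {..<N} undefined (\<lambda>_. UNIV)"
    and "2 * 2 powr (- (real N * \<nu>1)) * real L \<le> real (card {l. l < L \<and> C l \<notin> cond_typical P s N \<delta> \<eta>})"
proof -
  obtain s :: "nat \<Rightarrow> 's" where s:
    "real (card {l. l < L \<and> C l \<in> cond_typical P s N \<delta> \<eta>}) \<le> (1 - 2 * 2 powr (- (real N * \<nu>1))) * real L"
    using assms by (auto simp: good_codebook_def not_less)
  define s' where "s' i = (if i < N then s i else undefined)" for i
  have "{l. l < L \<and> C l \<in> cond_typical P s N \<delta> \<eta>} \<union> {l. l < L \<and> C l \<notin> cond_typical P s N \<delta> \<eta>} = {..<L}"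
    by auto
  then have "card {l. l < L \<and> C l \<in> cond_typical P s N \<delta> \<eta>} + card {l. l < L \<and> C l \<notin> cond_typical P s N \<delta> \<eta>} = L"
    by (subst card_Un_disjoint[symmetric]) auto
  with s have "2 * 2 powr (- (real N * \<nu>1)) * real L \<le> real (card {l. l < L \<and> C l \<notin> cond_typical P s N \<delta> \<eta>})"
    by (simp add: algebra_simps)
  moreover have "cond_typical P s' N \<delta> \<eta> = cond_typical P s N \<delta> \<eta>"
    unfolding s'_def by (rule cond_typical_restrict)
  moreover have "s' \<in> PiE_dflt {..<N} undefined (\<lambda>_. UNIV)"
    by (auto simp: PiE_dflt_def s'_def)
  ultimately show thesis
    using that[of s'] by simp
qed

lemma prob_not_good_codebook_le:
  fixes P :: "'x pmf"
  assumes typical: "\<And>s :: nat \<Rightarrow> 's::finite.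
    measure_pmf.prob (iid_seq P N) (cond_typical P s N \<delta> \<eta>) > 1 - 2 powr (- (real N * \<nu>1))"
  shows "measure_pmf.prob (random_codebook P N L) {C. \<not> good_codebook P TYPE('s) N L \<delta> \<eta> \<nu>1 C}
     \<le> real CARD('s) ^ N * exp (- ((2 * ln 2 - 1) * (2 powr (- (real N * \<nu>1)) * real L)))"
proof -
  define p where "p = 2 powr (- (real N * \<nu>1))"
  define S where "S = PiE_dflt {..<N} (undefined :: 's) (\<lambda>_. UNIV)"
  define Bad where "Bad s = {C. 2 * p * real L \<le> real (card {l. l < L \<and> C l \<notin> cond_typical P s N \<delta> \<eta>})}"
    for s :: "nat \<Rightarrow> 's"
  have S_finite: "finite S" and S_card: "real (card S) = real CARD('s) ^ N"
    by (auto simp: S_def finite_PiE_dflt card_PiE_dflt)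
  have "{C. \<not> good_codebook P TYPE('s) N L \<delta> \<eta> \<nu>1 C} \<subseteq> (\<Union>s\<in>S. Bad s)"
    by (auto simp: S_def Bad_def p_def elim!: not_good_codebook_obtains_state_seq)
  then have "measure_pmf.prob (random_codebook P N L) {C. \<not> good_codebook P TYPE('s) N L \<delta> \<eta> \<nu>1 C}
      \<le> measure_pmf.prob (random_codebook P N L) (\<Union>s\<in>S. Bad s)"
    by (rule measure_pmf.finite_measure_mono) simp
  also have "\<dots> \<le> (\<Sum>s\<in>S. measure_pmf.prob (random_codebook P N L) (Bad s))"
    by (rule measure_pmf.finite_measure_subadditive_finite[OF S_finite]) simp
  also have "\<dots> \<le> (\<Sum>s\<in>S. exp (- ((2 * ln 2 - 1) * (p * real L))))"
  proof (rule sum_mono)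
    fix s :: "nat \<Rightarrow> 's"
    have "measure_pmf.prob (iid_seq P N) (- cond_typical P s N \<delta> \<eta>) \<le> p"
      using typical[of s] by (simp add: measure_pmf_prob_Compl p_def)
    then show "measure_pmf.prob (random_codebook P N L) (Bad s) \<le> exp (- ((2 * ln 2 - 1) * (p * real L)))"
      unfolding random_codebook_def Bad_def by (rule prob_Pi_pmf_card_outside_ge_twice)
  qed
  finally show ?thesis
    by (simp add: S_card p_def)
qed

lemma powr_neg_mult_nat_floor_powr_ge:
  assumes "x \<ge> 0"
  shows "2 powr (- x) * real (nat \<lfloor>2 powr y\<rfloor>) \<ge> 2 powr (y - x) - 1"
proof -
  have "2 powr (- x) \<le> 1"
    using assms powr_mono[of 0 x 2] by (simp add: powr_minus_divide)
  moreover have "real (nat \<lfloor>2 powr y\<rfloor>) \<ge> 2 powr y - 1"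
    by linarith
  then have "2 powr (- x) * real (nat \<lfloor>2 powr y\<rfloor>) \<ge> 2 powr (- x) * (2 powr y - 1)"
    by (simp add: mult_left_mono)
  moreover have "2 powr (- x) * 2 powr y = 2 powr (y - x)"
    by (simp add: powr_add[symmetric])
  ultimately show ?thesis
    by (simp add: algebra_simps)
qed

lemma tendsto_power_mult_exp_neg_double_exp:
  fixes k c d :: real
  assumes "k > 0" "c > 0" "d > 0"
  shows "(\<lambda>N. k ^ N * exp (- (c * (2 powr (real N * d) - 1)))) \<longlonglongrightarrow> 0"
proof -
  have "(\<lambda>N. exp (real N * ln k - c * exp (real N * (d * ln 2)))) \<longlonglongrightarrow> 0"
    using assms by real_asymp
  then have "(\<lambda>N. exp c * exp (real N * ln k - c * exp (real N * (d * ln 2)))) \<longlonglongrightarrow> 0"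
    by (rule tendsto_mult_right_zero)
  moreover have "k ^ N * exp (- (c * (2 powr (real N * d) - 1)))
      = exp c * exp (real N * ln k - c * exp (real N * (d * ln 2)))" for N
    using assms by (simp add: powr_def algebra_simps flip: powr_realpow exp_add)
  ultimately show ?thesis
    by simp
qed

lemma prob_good_codebook_rate_ge:
  fixes P :: "'x pmf" and R :: real
  assumes typical: "\<And>s :: nat \<Rightarrow> 's::finite.
    measure_pmf.prob (iid_seq P N) (cond_typical P s N \<delta> \<eta>) > 1 - 2 powr (- (real N * \<nu>1))"
    and "\<nu>1 \<ge> 0"
  defines "L \<equiv> nat \<lfloor>2 powr (real N * R)\<rfloor>"
  shows "measure_pmf.prob (random_codebook P N L) {C. good_codebook P TYPE('s) N L \<delta> \<eta> \<nu>1 C}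
     \<ge> 1 - real CARD('s) ^ N * exp (- ((2 * ln 2 - 1) * (2 powr (real N * (R - \<nu>1)) - 1)))"
proof -
  have "2 powr (real N * (R - \<nu>1)) - 1 \<le> 2 powr (- (real N * \<nu>1)) * real L"
    using powr_neg_mult_nat_floor_powr_ge[of "real N * \<nu>1" "real N * R"] \<open>\<nu>1 \<ge> 0\<close>
    by (simp add: L_def algebra_simps)
  then have "(2 * ln 2 - 1) * (2 powr (real N * (R - \<nu>1)) - 1)
      \<le> (2 * ln 2 - 1) * (2 powr (- (real N * \<nu>1)) * real L)"
    using ln2_ge_two_thirds by (intro mult_left_mono) auto
  then have "real CARD('s) ^ N * exp (- ((2 * ln 2 - 1) * (2 powr (- (real N * \<nu>1)) * real L)))
      \<le> real CARD('s) ^ N * exp (- ((2 * ln 2 - 1) * (2 powr (real N * (R - \<nu>1)) - 1)))"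
    by (intro mult_left_mono) auto
  with prob_not_good_codebook_le[OF typical, where L = L]
  have "measure_pmf.prob (random_codebook P N L) {C. \<not> good_codebook P TYPE('s) N L \<delta> \<eta> \<nu>1 C}
      \<le> real CARD('s) ^ N * exp (- ((2 * ln 2 - 1) * (2 powr (real N * (R - \<nu>1)) - 1)))"
    by linarith
  moreover have "{C. \<not> good_codebook P TYPE('s) N L \<delta> \<eta> \<nu>1 C} = - {C. good_codebook P TYPE('s) N L \<delta> \<eta> \<nu>1 C}"
    by auto
  ultimately show ?thesis
    by (simp add: measure_pmf_prob_Compl)
qed

theorem lemma1:
  fixes P :: "'x::finite pmf" and \<delta> \<eta> \<nu>1 R' :: real
  assumes "\<delta> > 0" and "\<eta> > 0" and "\<nu>1 > 0"
    and hyp: "\<exists>N0. \<forall>N\<ge>N0. \<forall>s :: nat \<Rightarrow> 's::finite.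
       measure_pmf.prob (iid_seq P N) (cond_typical P s N \<delta> \<eta>) > 1 - 2 powr (- (real N * \<nu>1))"
    and "R' > \<nu>1"
  shows "\<exists>\<epsilon>1 :: nat \<Rightarrow> real. \<epsilon>1 \<longlonglongrightarrow> 0 \<and>
    (\<forall>N. measure_pmf.prob (random_codebook P N (nat \<lfloor>2 powr (real N * R')\<rfloor>))
            {C. good_codebook P TYPE('s) N (nat \<lfloor>2 powr (real N * R')\<rfloor>) \<delta> \<eta> \<nu>1 C}
          > 1 - \<epsilon>1 N)"
proof -
  obtain N0 where N0: "\<And>N s. N \<ge> N0 \<Longrightarrow>
      measure_pmf.prob (iid_seq P N) (cond_typical P (s :: nat \<Rightarrow> 's) N \<delta> \<eta>) > 1 - 2 powr (- (real N * \<nu>1))"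
    using hyp by blast
  define b where "b N = real CARD('s) ^ N * exp (- ((2 * ln 2 - 1) * (2 powr (real N * (R' - \<nu>1)) - 1)))"
    for N
  \<comment> \<open>doubling \<open>b\<close> turns the non-strict bound into the required strict one\<close>
  define \<epsilon> where "\<epsilon> N = (if N0 \<le> N then 2 * b N else 2)" for N
  have "(\<lambda>N. 2 * b N) \<longlonglongrightarrow> 0"
    unfolding b_def using ln2_ge_two_thirds \<open>R' > \<nu>1\<close>
    by (intro tendsto_mult_right_zero tendsto_power_mult_exp_neg_double_exp) auto
  then have "\<epsilon> \<longlonglongrightarrow> 0"
    by (rule Lim_transform_eventually) (auto simp: \<epsilon>_def intro: eventually_mono[OF eventually_ge_at_top[of N0]])
  moreover have "measure_pmf.prob (random_codebook P N (nat \<lfloor>2 powr (real N * R')\<rfloor>))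
      {C. good_codebook P TYPE('s) N (nat \<lfloor>2 powr (real N * R')\<rfloor>) \<delta> \<eta> \<nu>1 C} > 1 - \<epsilon> N" for N
  proof (cases "N0 \<le> N")
    case True
    have "b N > 0"
      by (simp add: b_def)
    moreover have "measure_pmf.prob (random_codebook P N (nat \<lfloor>2 powr (real N * R')\<rfloor>))
        {C. good_codebook P TYPE('s) N (nat \<lfloor>2 powr (real N * R')\<rfloor>) \<delta> \<eta> \<nu>1 C} \<ge> 1 - b N"
      unfolding b_def using prob_good_codebook_rate_ge[OF N0[OF True], of R'] \<open>\<nu>1 > 0\<close> by simp
    ultimately show ?thesis
      using True by (simp add: \<epsilon>_def)
  next
    case False
    then show ?thesis
      by (simp add: \<epsilon>_def less_le_trans[OF _ measure_nonneg])
  qed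
  ultimately show ?thesis
    by blast
qed

end
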